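(* Let $q$ be a prime power and $n=2^v$ with $v\ge0$ and $\gcd(q,n)=1$. The following are equivalent: (i) Type-I duadic splittings of $\mathbb{Z}_{2^v}$ exist; (ii) Type-I duadic splittings of $\mathbb{Z}_{2^v}$ given by some $q$-translation exist; (iii) $0<v<2\,\nu_2(q-1)$. If these hold, there is an integer $u$ with $\max\{0,v-\nu_2(q-1)\}\le u<\min\{v,\nu_2(q-1)\}$, and for such $u$, $\tau_{2^u}$ is a $q$-translation of $\mathbb{Z}_{2^v}$ (i.e. $q2^u\equiv2^u\pmod{2^v}$) and Type-I duadic splittings of $\mathbb{Z}_{2^v}$ given by $\tau_{2^u}$ exist.
   Context: $\mathbb{Z}_n=\mathbb{Z}/n\mathbb{Z}$, $\mathbb{Z}_n^*$ its units. $\mu_q:i\mapsto qi\bmod n$; a subset $P\subseteq\mathbb{Z}_n$ is $\mu_q$-invariant if $\mu_q(P)=P$. For $s\in\mathbb{Z}_n^*$, $t\in\mathbb{Z}_n$ with $qt\equiv t\pmod n$: $\rho_{s,t}:i\mapsto s(i+t)\bmod n$, and $\tau_t=\rho_{1,t}$ is a $q$-translation. Type-I duadic splittings of $\mathbb{Z}_n$ given by $\rho_{s,t}$ exist if there is a $\mu_q$-invariant $P$ with $\mathbb{Z}_n=P\cup\rho_{s,t}(P)$ a disjoint union; Type-I duadic splittings of $\mathbb{Z}_n$ exist if this holds for some such $s,t$. $\nu_2$ is the $2$-adic valuation, $\nu_2(0)=\infty$. *)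

theory Defs
  imports "HOL-Number_Theory.Number_Theory"
begin

text \<open>Z_n is represented by the residues {0..<n} (n > 0); all maps are taken mod n.\<close>

definition mu :: "nat \<Rightarrow> nat \<Rightarrow> nat \<Rightarrow> nat" where
  "mu n q i = (q * i) mod n"

definition mu_invariant :: "nat \<Rightarrow> nat \<Rightarrow> nat set \<Rightarrow> bool" where
  "mu_invariant n q P \<longleftrightarrow> mu n q ` P = P"

definition rho :: "nat \<Rightarrow> nat \<Rightarrow> nat \<Rightarrow> nat \<Rightarrow> nat" where
  "rho n s t i = (s * (i + t)) mod n"

definition admissible :: "nat \<Rightarrow> nat \<Rightarrow> nat \<Rightarrow> nat \<Rightarrow> bool" where
  "admissible n q s t \<longleftrightarrow> s < n \<and> coprime s n \<and> t < n \<and> [q * t = t] (mod n)"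

definition typeI_splitting_given_by :: "nat \<Rightarrow> nat \<Rightarrow> nat \<Rightarrow> nat \<Rightarrow> bool" where
  "typeI_splitting_given_by n q s t \<longleftrightarrow> admissible n q s t \<and>
     (\<exists>P. P \<subseteq> {0..<n} \<and> mu_invariant n q P \<and>
          P \<union> rho n s t ` P = {0..<n} \<and> P \<inter> rho n s t ` P = {})"

definition typeI_splitting_exists :: "nat \<Rightarrow> nat \<Rightarrow> bool" where
  "typeI_splitting_exists n q \<longleftrightarrow> (\<exists>s t. typeI_splitting_given_by n q s t)"

definition typeI_splitting_by_translation :: "nat \<Rightarrow> nat \<Rightarrow> bool" where
  "typeI_splitting_by_translation n q \<longleftrightarrow> (\<exists>t. typeI_splitting_given_by n q 1 t)"

end

theory Submission
  imports Defs
begin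

text \<open>
  Write \<open>k = \<nu>\<^sub>2(q - 1)\<close>. If \<open>P\<close> and \<open>\<rho>(P)\<close> partition \<open>\<int>\<^sub>n\<close>, then, as \<open>\<mu>\<^sub>q\<close>
  preserves \<open>P\<close> and commutes with \<open>\<rho>\<close>, no \<open>i\<close> satisfies \<open>\<rho>(i) = i\<close> or \<open>\<rho>(i) = qi\<close>.
  For \<open>n = 2\<^sup>v\<close> with \<open>v \<ge> 2k\<close> such an \<open>i\<close> always exists: \<open>qt \<equiv> t\<close> forces \<open>2\<^sup>k | t\<close>,
  and since \<open>(s - 1) - (s - q) = q - 1\<close> has valuation exactly \<open>k\<close>, one of \<open>s - 1\<close>,
  \<open>s - q\<close> has valuation at most \<open>k\<close>, which makes \<open>s(x + t) \<equiv> x\<close> or \<open>s(x + t) \<equiv> qx\<close>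
  solvable. Conversely, for \<open>v - k \<le> u < min v k\<close>, multiplication by
  \<open>q \<equiv> 1 (mod 2\<^sup>u\<^sup>+\<^sup>1)\<close> preserves bit \<open>u\<close> of every residue while translation by \<open>2\<^sup>u\<close>
  flips it, so the residues with bit \<open>u\<close> clear form the required \<open>P\<close>.
\<close>

lemma prime_power_dvd_cofactor:
  fixes a t p :: "'a :: factorial_semiring"
  assumes "prime p" "a \<noteq> 0" "p ^ v dvd a * t"
  shows "p ^ (v - multiplicity p a) dvd t"
proof (cases "t = 0")
  case False
  have "v \<le> multiplicity p (a * t)"
    using assms False by (intro multiplicity_geI) auto
  also have "\<dots> = multiplicity p a + multiplicity p t"
    using assms False by (intro prime_elem_multiplicity_mult_distrib) auto
  finally show ?thesis by (intro multiplicity_dvd') simp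
qed simp

lemma gcd_prime_power_dvd:
  fixes c p :: int
  assumes "prime p" "\<not> p ^ Suc k dvd c"
  shows "gcd c (p ^ v) dvd p ^ k"
proof -
  obtain m where "m \<le> v" and g: "gcd c (p ^ v) = p ^ m"
    using divides_primepow[OF assms(1), of "gcd c (p ^ v)" v] by auto
  have "m \<le> k"
  proof (rule ccontr)
    assume "\<not> m \<le> k"
    then have "p ^ Suc k dvd p ^ m" by (intro le_imp_power_dvd) simp
    also have "p ^ m dvd c" by (metis g gcd_dvd1)
    finally show False using assms(2) by contradiction
  qed
  then show ?thesis by (simp add: g le_imp_power_dvd)
qed

lemma cong_affine_solvable:
  fixes a b c p :: int
  assumes "prime p" "\<not> p ^ Suc k dvd b - a" "p ^ k dvd c"
  shows "\<exists>x. [a * (x + c) = b * x] (mod p ^ v)"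
proof -
  have "gcd (b - a) (p ^ v) dvd a * c"
    using gcd_prime_power_dvd[OF assms(1,2)] assms(3) by (blast intro: dvd_trans dvd_mult)
  then obtain x where "[(b - a) * x = a * c] (mod p ^ v)"
    using cong_solve_dvd_int by blast
  then have "[(b - a) * x + a * x = a * c + a * x] (mod p ^ v)"
    by (rule cong_add) (rule cong_refl)
  then show ?thesis by (auto simp: algebra_simps cong_sym_eq)
qed

lemma bit_mod_pow2: "u < v \<Longrightarrow> bit ((x::nat) mod 2 ^ v) u \<longleftrightarrow> bit x u"
  by (metis bit_take_bit_iff take_bit_eq_mod)

lemma bit_eq_of_cong_pow2:
  fixes a b :: nat
  assumes "[a = b] (mod 2 ^ Suc u)"
  shows "bit a u \<longleftrightarrow> bit b u"
  using assms bit_mod_pow2[of u "Suc u"] unfolding cong_def by (metis lessI)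

lemma bit_add_pow2_self: "bit ((x::nat) + 2 ^ u) u \<longleftrightarrow> \<not> bit x u"
  by (simp add: bit_iff_odd)

lemma image_eq_diff_of_swap:
  assumes "f ` X = X" "P \<subseteq> X" "f ` P \<subseteq> X - P" "f ` (X - P) \<subseteq> P"
  shows "f ` P = X - P"
  using assms by blast

lemma disjoint_image_split_no_agreement:
  assumes split: "P \<union> r ` P = X" "P \<inter> r ` P = {}" and inj: "inj_on r X"
    and g_P: "g ` P \<subseteq> P" and g_X: "g ` X \<subseteq> X"
    and comm: "\<And>x. x \<in> X \<Longrightarrow> r (g x) = g (r x)"
    and "i \<in> X"
  shows "r i \<noteq> g i"
proof
  assume eq: "r i = g i"
  show False
  proof (cases "i \<in> P")
    case True
    then have "g i \<in> P" "g i \<in> r ` P" using g_P by (auto simp flip: eq)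
    then show False using split(2) by blast
  next
    case False
    then obtain p where p: "p \<in> P" "i = r p" using \<open>i \<in> X\<close> split(1) by auto
    have "p \<in> X" using p(1) split(1) by blast
    have "r (g p) = r i" using comm[OF \<open>p \<in> X\<close>] eq p(2) by simp
    then have "g p = i" using inj g_X \<open>p \<in> X\<close> \<open>i \<in> X\<close> by (auto dest: inj_onD)
    then show False using g_P p(1) False by blast
  qed
qed

lemma inj_on_rho:
  assumes "coprime s n"
  shows "inj_on (rho n s t) {0..<n}"
proof
  fix x y assume "x \<in> {0..<n}" "y \<in> {0..<n}" "rho n s t x = rho n s t y"
  moreover from this have "[x + t = y + t] (mod n)"
    using assms cong_mult_lcancel_nat unfolding rho_def cong_def by blast
  then have "[x = y] (mod n)" by (simp only: cong_add_rcancel_nat)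
  ultimately show "x = y" by (simp add: cong_def)
qed

lemma mu_eq_rho: "mu n q = rho n q 0"
  by (simp add: fun_eq_iff mu_def rho_def)

lemma rho_mu_commute:
  assumes "[q * t = t] (mod n)"
  shows "rho n s t (mu n q x) = mu n q (rho n s t x)"
proof -
  have "[s * ((q * x) mod n + t) = s * (q * x + q * t)] (mod n)"
    using assms by (intro cong_scalar_left cong_add) (auto simp: cong_def)
  also have "s * (q * x + q * t) = q * (s * (x + t))" by (simp add: algebra_simps)
  also have "[\<dots> = q * ((s * (x + t)) mod n)] (mod n)"
    by (simp add: cong_def mod_mult_right_eq)
  finally show ?thesis unfolding rho_def mu_def cong_def .
qed

lemma mu_invariantI:
  assumes "coprime q n" "P \<subseteq> {0..<n}" "mu n q ` P \<subseteq> P"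
  shows "mu_invariant n q P"
proof -
  have "inj_on (mu n q) P"
    using inj_on_subset[OF inj_on_rho[OF assms(1)] assms(2)] by (simp add: mu_eq_rho)
  moreover have "finite P" using assms(2) finite_subset by blast
  ultimately show ?thesis unfolding mu_invariant_def using assms(3) by (intro endo_inj_surj)
qed

lemma typeI_splitting_given_by_rho_ne:
  assumes "typeI_splitting_given_by n q s t" "i < n"
  shows "rho n s t i \<noteq> i" and "rho n s t i \<noteq> mu n q i"
proof -
  obtain P where split: "P \<union> rho n s t ` P = {0..<n}" "P \<inter> rho n s t ` P = {}"
    and "mu_invariant n q P" "admissible n q s t"
    using assms(1) unfolding typeI_splitting_given_by_def by blast
  then have adm: "coprime s n" "[q * t = t] (mod n)" and inv: "mu n q ` P = P"
    by (simp_all add: admissible_def mu_invariant_def)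
  note no_agreement = disjoint_image_split_no_agreement[OF split inj_on_rho[OF adm(1)]]
  show "rho n s t i \<noteq> i"
    using no_agreement[of id] assms(2) by simp
  show "rho n s t i \<noteq> mu n q i"
  proof (rule no_agreement)
    show "mu n q ` {0..<n} \<subseteq> {0..<n}" using assms(2) by (auto simp: mu_def)
  qed (use inv rho_mu_commute[OF adm(2)] assms(2) in auto)
qed

lemma rho_of_int_cong:
  assumes "n > 0" "[int s * (x + int t) = b * x] (mod int n)"
  shows "\<exists>i<n. int (rho n s t i) = (b * int i) mod int n"
proof (intro exI conjI)
  define i where "i = nat (x mod int n)"
  show "i < n" using assms(1) by (simp add: i_def nat_less_iff)
  have "int i = x mod int n" using assms(1) by (simp add: i_def)
  then have "int (rho n s t i) = (int s * (x + int t)) mod int n"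
    by (simp add: rho_def of_nat_mod) (metis mod_add_left_eq mod_mult_right_eq)
  also have "\<dots> = (b * x) mod int n" using assms(2) by (simp add: cong_def)
  also have "\<dots> = (b * int i) mod int n"
    by (simp add: \<open>int i = x mod int n\<close> mod_mult_right_eq)
  finally show "int (rho n s t i) = (b * int i) mod int n" .
qed

lemma q_translation_pow2_dvd:
  fixes q t :: nat
  assumes "q > 1" "[q * t = t] (mod 2 ^ v)" "2 * multiplicity 2 (q - 1) \<le> v"
  shows "2 ^ multiplicity 2 (q - 1) dvd t"
proof -
  define k where "k = multiplicity 2 (q - 1)"
  have "2 ^ v dvd (q - 1) * t"
    using assms(1,2) by (simp add: cong_altdef_nat diff_mult_distrib)
  then have "2 ^ (v - k) dvd t"
    unfolding k_def using assms(1) by (intro prime_power_dvd_cofactor) auto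
  moreover have "(2::nat) ^ k dvd 2 ^ (v - k)"
    using assms(3) by (intro le_imp_power_dvd) (simp add: k_def)
  ultimately show ?thesis unfolding k_def[symmetric] by (rule dvd_trans[rotated])
qed

lemma rho_fixed_or_mu_point_pow2:
  assumes "q > 1" "[q * t = t] (mod 2 ^ v)" "2 * multiplicity 2 (q - 1) \<le> v"
  shows "\<exists>i < 2 ^ v. rho (2 ^ v) s t i = i \<or> rho (2 ^ v) s t i = mu (2 ^ v) q i"
proof -
  define k where "k = multiplicity 2 (q - 1)"
  have "int (2 ^ k) dvd int t"
    using q_translation_pow2_dvd[OF assms] by (simp only: int_dvd_int_iff k_def)
  then have t_dvd: "(2::int) ^ k dvd int t" by simp
  have "\<not> 2 ^ Suc k dvd q - 1"
    using power_dvd_iff_le_multiplicity[of "q - 1" 2 "Suc k"] assms(1) unfolding k_def by simp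
  then have "\<not> (2::int) ^ Suc k dvd (int q - int s) - (1 - int s)"
    using assms(1) by (simp flip: int_dvd_int_iff add: of_nat_diff)
  then obtain b where b: "b = 1 \<or> b = int q" and "\<not> 2 ^ Suc k dvd b - int s"
    using dvd_diff by blast
  then obtain x where "[int s * (x + int t) = b * x] (mod 2 ^ v)"
    using cong_affine_solvable[OF two_is_prime _ t_dvd] by blast
  then obtain i where "i < 2 ^ v" "int (rho (2 ^ v) s t i) = (b * int i) mod 2 ^ v"
    using rho_of_int_cong[of "2 ^ v" s x t b] by auto
  moreover have "int (mu (2 ^ v) q i) = (int q * int i) mod 2 ^ v"
    by (simp add: mu_def of_nat_mod)
  ultimately show ?thesis using b by (intro exI[of _ i]) auto
qed

lemma typeI_splitting_pow2_bounds:
  assumes "q > 1" "typeI_splitting_given_by (2 ^ v) q s t"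
  shows "0 < v \<and> v < 2 * multiplicity 2 (q - 1)"
proof -
  note rho_ne = typeI_splitting_given_by_rho_ne[OF assms(2)]
  have "v > 0"
    using rho_ne(1)[of 0] by (cases "v = 0") (auto simp: rho_def)
  moreover have "[q * t = t] (mod 2 ^ v)"
    using assms(2) unfolding typeI_splitting_given_by_def admissible_def by blast
  then have "\<not> 2 * multiplicity 2 (q - 1) \<le> v"
    using rho_fixed_or_mu_point_pow2[OF assms(1)] rho_ne by blast
  ultimately show ?thesis by simp
qed

lemma typeI_splitting_given_by_translation_pow2:
  assumes "u < v" "[q = 1] (mod 2 ^ Suc u)" "[q * 2 ^ u = 2 ^ u] (mod 2 ^ v)"
  shows "typeI_splitting_given_by (2 ^ v) q 1 (2 ^ u)"
proof -
  define n \<tau> P where "n = (2::nat) ^ v" and "\<tau> = rho n 1 (2 ^ u)"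
    and "P = {i. i < n \<and> \<not> bit i u}"
  have "2 ^ u < n" "1 < n" using assms(1) one_less_power[of "2::nat" v] by (simp_all add: n_def)
  have flip: "bit (\<tau> x) u \<longleftrightarrow> \<not> bit x u" for x
    using assms(1) by (simp add: \<tau>_def rho_def n_def bit_mod_pow2 bit_add_pow2_self)
  have \<tau>_lt: "\<tau> x < n" for x
    using \<open>1 < n\<close> by (simp add: \<tau>_def rho_def)
  have \<tau>_onto: "\<tau> ` {0..<n} = {0..<n}"
    using inj_on_rho[of 1 n] \<tau>_lt by (intro endo_inj_surj) (auto simp: \<tau>_def)
  then have "\<tau> ` P = {0..<n} - P"
    using \<tau>_lt flip by (intro image_eq_diff_of_swap) (auto simp: P_def)
  then have "P \<union> \<tau> ` P = {0..<n}" "P \<inter> \<tau> ` P = {}"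
    unfolding P_def by auto
  moreover have "mu_invariant n q P"
  proof (rule mu_invariantI)
    have "odd q"
      using cong_dvd_modulus_nat[OF assms(2), of 2] by (simp add: cong_def odd_iff_mod_2_eq_one)
    then show "coprime q n" by (simp add: n_def)
    show "mu n q ` P \<subseteq> P"
    proof
      fix y assume "y \<in> mu n q ` P"
      then obtain x where "x \<in> P" "y = (q * x) mod 2 ^ v" by (auto simp: mu_def n_def)
      moreover have "[q * x = 1 * x] (mod 2 ^ Suc u)" using assms(2) by (rule cong_scalar_right)
      ultimately show "y \<in> P"
        using assms(1) bit_eq_of_cong_pow2 by (simp add: P_def n_def bit_mod_pow2)
    qed
  qed (auto simp: P_def)
  moreover have "admissible n q 1 (2 ^ u)"
    using assms(3) \<open>2 ^ u < n\<close> \<open>1 < n\<close> by (simp add: admissible_def n_def)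
  ultimately show ?thesis
    unfolding typeI_splitting_given_by_def n_def[symmetric] \<tau>_def[symmetric] P_def by blast
qed

lemma q_translation_pow2:
  fixes q :: nat
  assumes "[q = 1] (mod 2 ^ k)" "v \<le> u + k"
  shows "[q * 2 ^ u = 2 ^ u] (mod 2 ^ v)"
proof -
  have "[q * 2 ^ u = 2 ^ u] (mod 2 ^ (u + k))"
    using cong_cmult_rightI[OF assms(1), of "2 ^ u"] by (simp add: power_add mult.commute)
  then show ?thesis
    by (rule cong_dvd_modulus_nat) (simp add: le_imp_power_dvd assms(2))
qed

lemma typeI_splitting_pow2_of_valuation:
  assumes "[q = 1] (mod 2 ^ k)" "v \<le> u + k" "u < v" "u < k"
  shows "typeI_splitting_given_by (2 ^ v) q 1 (2 ^ u)"
proof (rule typeI_splitting_given_by_translation_pow2)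
  show "[q = 1] (mod 2 ^ Suc u)"
    using assms(1) by (rule cong_dvd_modulus_nat) (intro le_imp_power_dvd Suc_leI \<open>u < k\<close>)
qed (use assms q_translation_pow2 in auto)

theorem theorem3p8:
  fixes q v :: nat
  assumes "primepow q"
    and "coprime q (2 ^ v)"
  shows "(typeI_splitting_exists (2 ^ v) q \<longleftrightarrow> typeI_splitting_by_translation (2 ^ v) q)
       \<and> (typeI_splitting_by_translation (2 ^ v) q \<longleftrightarrow>
            0 < v \<and> v < 2 * multiplicity 2 (q - 1))
       \<and> (0 < v \<and> v < 2 * multiplicity 2 (q - 1) \<longrightarrow>
            (\<exists>u::nat. max 0 (int v - int (multiplicity 2 (q - 1))) \<le> int u
                       \<and> u < min v (multiplicity 2 (q - 1)))
          \<and> (\<forall>u::nat. max 0 (int v - int (multiplicity 2 (q - 1))) \<le> int u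
                       \<and> u < min v (multiplicity 2 (q - 1)) \<longrightarrow>
               [q * 2 ^ u = 2 ^ u] (mod 2 ^ v)
               \<and> typeI_splitting_given_by (2 ^ v) q 1 (2 ^ u)))"
proof -
  define k where "k = multiplicity 2 (q - 1)"
  have "q > 1" using primepow_gt_Suc_0[OF assms(1)] by simp
  have q_cong: "[q = 1] (mod 2 ^ k)"
    using multiplicity_dvd[of 2 "q - 1"] \<open>q > 1\<close> by (simp add: k_def cong_altdef_nat)
  have bounds: "0 < v \<and> v < 2 * k" if "typeI_splitting_given_by (2 ^ v) q s t" for s t
    using typeI_splitting_pow2_bounds[OF \<open>q > 1\<close> that] by (simp add: k_def)
  have splitting: "[q * 2 ^ u = 2 ^ u] (mod 2 ^ v) \<and> typeI_splitting_given_by (2 ^ v) q 1 (2 ^ u)"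
    if "v \<le> u + k" "u < v" "u < k" for u
    using q_translation_pow2[OF q_cong that(1)] typeI_splitting_pow2_of_valuation[OF q_cong that]
    by blast
  have witness: "v \<le> (v - k) + k \<and> v - k < v \<and> v - k < k" if "0 < v \<and> v < 2 * k"
    using that by auto
  have u_range: "max 0 (int v - int k) \<le> int u \<and> u < min v k \<longleftrightarrow> v \<le> u + k \<and> u < v \<and> u < k"
    for u by auto
  have "typeI_splitting_by_translation (2 ^ v) q \<longleftrightarrow> 0 < v \<and> v < 2 * k"
    using bounds splitting witness unfolding typeI_splitting_by_translation_def by blast
  moreover have "typeI_splitting_exists (2 ^ v) q \<longleftrightarrow> typeI_splitting_by_translation (2 ^ v) q"
    using bounds calculation unfolding typeI_splitting_exists_def
    by (auto simp: typeI_splitting_by_translation_def)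
  ultimately show ?thesis
    unfolding k_def[symmetric] u_range using splitting witness by blast
qed

end
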